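(* Let $G$ be an oriented graph derived from a Burling tree $(T,r,\ell,c)$, and let $u,v,w$ be three distinct vertices of $G$ appearing in this order along a branch of $T$. Then every path (not necessarily directed) in $G$ from $u$ to $w$ goes through an in-neighbor of $v$ in $G$. In particular, $N^-[v]$ is a full in-star cutset of $G$ and $N[v]$ is a full star cutset of $G$, each of which separates $u$ and $w$.
   Context: Oriented graphs are finite, without loops, multiple arcs or pairs of opposite arcs; paths and connectivity in an oriented graph refer to its underlying graph. In a rooted tree $T$ with root $r$, each non-root vertex $v$ has a parent $p(v)$; children, leaves, ancestors and descendants are as usual. A branch is a sequence $v_1\dots v_k$ ($k\ge0$) with $v_i$ the parent of $v_{i+1}$; it starts at $v_1$. A Burling tree is a 4-tuple $(T,r,\ell,c)$: $T$ a rooted tree with root $r$; $\ell$ assigns to each non-leaf vertex $v$ one of its children $\ell(v)$ (the last-born of $v$); $c$ assigns to every vertex $v$ that is neither the root nor a last-born the vertex-set of a (possibly empty) branch starting at $\ell(p(v))$, and $c(v)=\emptyset$ if $v$ is the root or a last-born. The oriented graph fully derived from it has vertex-set $V(T)$ and an arc $uv$ iff $v\in c(u)$; an oriented graph is derived from the Burling tree if it is an induced subgraph of the fully derived one. $N^-[v]$ is $v$ together with its in-neighbors, and $N[v]$ is $v$ together with all its neighbors. A full in-star cutset of $G$ is a set $N^-[v]$ such that $G\setminus N^-[v]$ is disconnected; a full star cutset is a set $N[v]$ such that $G\setminus N[v]$ is disconnected. A set $S$ separates $u$ and $w$ if $u$ and $w$ lie in distinct connected components of $G\setminus S$. *)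

theory Defs
  imports Main
begin

text \<open>The parent function p is only meaningful on non-root vertices.
  Acyclicity: every vertex reaches the root by iterating p.\<close>
definition rooted_tree :: "'a set \<Rightarrow> 'a \<Rightarrow> ('a \<Rightarrow> 'a) \<Rightarrow> bool" where
  "rooted_tree V r p \<longleftrightarrow> finite V \<and> r \<in> V \<and> (\<forall>v\<in>V - {r}. p v \<in> V)
     \<and> (\<forall>v\<in>V. \<exists>n. (p ^^ n) v = r)"

definition children :: "'a set \<Rightarrow> 'a \<Rightarrow> ('a \<Rightarrow> 'a) \<Rightarrow> 'a \<Rightarrow> 'a set" where
  "children V r p v = {u \<in> V. u \<noteq> r \<and> p u = v}"

definition is_branch :: "'a set \<Rightarrow> 'a \<Rightarrow> ('a \<Rightarrow> 'a) \<Rightarrow> 'a list \<Rightarrow> bool" where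
  "is_branch V r p xs \<longleftrightarrow> set xs \<subseteq> V \<and>
     (\<forall>i. Suc i < length xs \<longrightarrow> xs ! Suc i \<noteq> r \<and> p (xs ! Suc i) = xs ! i)"

definition last_born :: "'a \<Rightarrow> ('a \<Rightarrow> 'a) \<Rightarrow> ('a \<Rightarrow> 'a) \<Rightarrow> 'a \<Rightarrow> bool" where
  "last_born r p l v \<longleftrightarrow> v \<noteq> r \<and> v = l (p v)"

definition burling_tree ::
  "'a set \<Rightarrow> 'a \<Rightarrow> ('a \<Rightarrow> 'a) \<Rightarrow> ('a \<Rightarrow> 'a) \<Rightarrow> ('a \<Rightarrow> 'a set) \<Rightarrow> bool" where
  "burling_tree V r p l c \<longleftrightarrow> rooted_tree V r p
     \<and> (\<forall>v\<in>V. children V r p v \<noteq> {} \<longrightarrow> l v \<in> children V r p v)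
     \<and> (\<forall>v\<in>V. (v = r \<or> last_born r p l v) \<longrightarrow> c v = {})
     \<and> (\<forall>v\<in>V. v \<noteq> r \<and> \<not> last_born r p l v \<longrightarrow>
          (\<exists>xs. is_branch V r p xs \<and> (xs \<noteq> [] \<longrightarrow> hd xs = l (p v)) \<and> c v = set xs))"

definition derived_arcs :: "'a set \<Rightarrow> ('a \<Rightarrow> 'a set) \<Rightarrow> 'a \<Rightarrow> 'a \<Rightarrow> bool" where
  "derived_arcs S c x y \<longleftrightarrow> x \<in> S \<and> y \<in> S \<and> y \<in> c x"

definition adj :: "('a \<Rightarrow> 'a \<Rightarrow> bool) \<Rightarrow> 'a \<Rightarrow> 'a \<Rightarrow> bool" where
  "adj E x y \<longleftrightarrow> E x y \<or> E y x"

definition is_path :: "'a set \<Rightarrow> ('a \<Rightarrow> 'a \<Rightarrow> bool) \<Rightarrow> 'a list \<Rightarrow> bool" where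
  "is_path S E xs \<longleftrightarrow> xs \<noteq> [] \<and> set xs \<subseteq> S \<and> distinct xs \<and>
     (\<forall>i. Suc i < length xs \<longrightarrow> adj E (xs ! i) (xs ! Suc i))"

definition connected_in :: "'a set \<Rightarrow> ('a \<Rightarrow> 'a \<Rightarrow> bool) \<Rightarrow> 'a \<Rightarrow> 'a \<Rightarrow> bool" where
  "connected_in S E a b \<longleftrightarrow> (\<exists>xs. is_path S E xs \<and> hd xs = a \<and> last xs = b)"

definition disconnected :: "'a set \<Rightarrow> ('a \<Rightarrow> 'a \<Rightarrow> bool) \<Rightarrow> bool" where
  "disconnected S E \<longleftrightarrow> (\<exists>a\<in>S. \<exists>b\<in>S. \<not> connected_in S E a b)"

definition in_nbrs :: "'a set \<Rightarrow> ('a \<Rightarrow> 'a \<Rightarrow> bool) \<Rightarrow> 'a \<Rightarrow> 'a set" where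
  "in_nbrs S E v = {x \<in> S. E x v}"

definition closed_in_nbhd :: "'a set \<Rightarrow> ('a \<Rightarrow> 'a \<Rightarrow> bool) \<Rightarrow> 'a \<Rightarrow> 'a set" where
  "closed_in_nbhd S E v = insert v (in_nbrs S E v)"

definition closed_nbhd :: "'a set \<Rightarrow> ('a \<Rightarrow> 'a \<Rightarrow> bool) \<Rightarrow> 'a \<Rightarrow> 'a set" where
  "closed_nbhd S E v = insert v {x \<in> S. adj E x v}"

definition full_in_star_cutset :: "'a set \<Rightarrow> ('a \<Rightarrow> 'a \<Rightarrow> bool) \<Rightarrow> 'a set \<Rightarrow> bool" where
  "full_in_star_cutset S E X \<longleftrightarrow>
     (\<exists>v\<in>S. X = closed_in_nbhd S E v \<and> disconnected (S - X) E)"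

definition full_star_cutset :: "'a set \<Rightarrow> ('a \<Rightarrow> 'a \<Rightarrow> bool) \<Rightarrow> 'a set \<Rightarrow> bool" where
  "full_star_cutset S E X \<longleftrightarrow>
     (\<exists>v\<in>S. X = closed_nbhd S E v \<and> disconnected (S - X) E)"

definition separates :: "'a set \<Rightarrow> ('a \<Rightarrow> 'a \<Rightarrow> bool) \<Rightarrow> 'a set \<Rightarrow> 'a \<Rightarrow> 'a \<Rightarrow> bool" where
  "separates S E X a b \<longleftrightarrow> a \<in> S - X \<and> b \<in> S - X \<and> \<not> connected_in (S - X) E a b"

end

(*
  Let D be the set of descendants of v. An arc x -> y of a Burling tree ends on a branch that
  starts at the last-born sibling of x. Hence (i) the two ends of an arc are never related by
  the ancestor order, (ii) every arc out of a proper descendant of v ends in D, and (iii) an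
  arc x -> y with x outside D and y in D has v in c(x): the branch c(x) starts at a sibling of
  x, which cannot lie strictly below v, and reaches y, so it passes through v.
  Now u lies outside D and w in D - {v}. Take the last edge xy of a path from u to w with x
  outside D. By (i), v has no neighbour in D, so y is not v; by (ii) the edge is an arc
  x -> y, and by (iii) x is an in-neighbour of v. Finally, (i) also shows that u and w are not
  adjacent to v, so they survive the removal of N[v].
*)
theory Submission
  imports Defs
begin

text \<open>The parent function is junk at the root, so a chain of parent steps may not leave r.\<close>
primrec nth_ancestor :: "('a \<Rightarrow> 'a) \<Rightarrow> 'a \<Rightarrow> nat \<Rightarrow> 'a \<Rightarrow> 'a \<Rightarrow> bool" where
  "nth_ancestor p r 0 y a \<longleftrightarrow> y = a"
| "nth_ancestor p r (Suc n) y a \<longleftrightarrow> y \<noteq> r \<and> nth_ancestor p r n (p y) a"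

definition descendant :: "('a \<Rightarrow> 'a) \<Rightarrow> 'a \<Rightarrow> 'a \<Rightarrow> 'a \<Rightarrow> bool" where
  "descendant p r y a \<longleftrightarrow> (\<exists>n. nth_ancestor p r n y a)"

lemma nth_ancestor_add:
  "nth_ancestor p r n y a \<Longrightarrow> nth_ancestor p r k a b \<Longrightarrow> nth_ancestor p r (n + k) y b"
  by (induction n arbitrary: y) auto

lemma nth_ancestor_unique:
  "nth_ancestor p r n y a \<Longrightarrow> nth_ancestor p r n y b \<Longrightarrow> a = b"
  by (induction n arbitrary: y) auto

lemma nth_ancestor_diff:
  "nth_ancestor p r t z a \<Longrightarrow> nth_ancestor p r n z b \<Longrightarrow> n \<le> t \<Longrightarrow> nth_ancestor p r (t - n) b a"
proof (induction n arbitrary: z t)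
  case (Suc n)
  then show ?case by (cases t) auto
qed simp

lemma nth_ancestor_avoids_root:
  "nth_ancestor p r n y a \<Longrightarrow> m < n \<Longrightarrow> (p ^^ m) y \<noteq> r"
proof (induction n arbitrary: y m)
  case (Suc n y m)
  show ?case
  proof (cases m)
    case (Suc k)
    then show ?thesis using Suc.prems Suc.IH[of "p y" k] by (simp add: funpow_swap1)
  qed (use Suc.prems in simp)
qed simp

lemma nth_ancestor_cycle:
  assumes "nth_ancestor p r n x x" shows "nth_ancestor p r (k * n) x x"
proof (induction k)
  case (Suc k)
  then show ?case using nth_ancestor_add[OF assms] by simp
qed simp

lemma nth_ancestor_self:
  assumes "rooted_tree V r p" "x \<in> V" "nth_ancestor p r n x x"
  shows "n = 0"
proof (rule ccontr)
  assume "n \<noteq> 0"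
  obtain N where "(p ^^ N) x = r" using assms(1,2) unfolding rooted_tree_def by blast
  moreover have "N < Suc N * n" using \<open>n \<noteq> 0\<close> by (cases n) auto
  ultimately show False
    using nth_ancestor_avoids_root[OF nth_ancestor_cycle[OF assms(3)]] by blast
qed

lemma branch_nth_ancestor:
  assumes "is_branch V r p xs" "a + s < length xs"
  shows "nth_ancestor p r s (xs ! (a + s)) (xs ! a)"
  using assms(2)
proof (induction s)
  case (Suc s)
  then show ?case using assms(1) unfolding is_branch_def by (simp add: add_Suc_right)
qed simp

lemma branch_descendant:
  assumes "is_branch V r p xs" "i \<le> j" "j < length xs"
  shows "descendant p r (xs ! j) (xs ! i)"
  using branch_nth_ancestor[OF assms(1), of i "j - i"] assms(2,3) unfolding descendant_def by auto

lemma descendant_parent: "y \<noteq> r \<Longrightarrow> descendant p r y (p y)"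
  unfolding descendant_def by (rule exI[of _ 1]) simp

lemma descendant_trans: "descendant p r y a \<Longrightarrow> descendant p r a b \<Longrightarrow> descendant p r y b"
  unfolding descendant_def by (meson nth_ancestor_add)

lemma proper_descendant_parent:
  assumes "descendant p r y a" "y \<noteq> a"
  shows "y \<noteq> r \<and> descendant p r (p y) a"
proof -
  obtain n where "nth_ancestor p r n y a" using assms(1) unfolding descendant_def by blast
  with assms(2) show ?thesis unfolding descendant_def by (cases n) auto
qed

lemma descendant_antisym:
  assumes "rooted_tree V r p" "x \<in> V" "descendant p r x y" "descendant p r y x"
  shows "x = y"
proof -
  obtain n m where xy: "nth_ancestor p r n x y" and yx: "nth_ancestor p r m y x"
    using assms(3,4) unfolding descendant_def by blast
  have "n + m = 0" using nth_ancestor_self[OF assms(1,2) nth_ancestor_add[OF xy yx]] .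
  with xy show ?thesis by simp
qed

lemma ancestors_comparable:
  assumes "descendant p r z a" "descendant p r z b"
  shows "descendant p r a b \<or> descendant p r b a"
proof -
  obtain t n where ta: "nth_ancestor p r t z a" and nb: "nth_ancestor p r n z b"
    using assms unfolding descendant_def by blast
  show ?thesis
  proof (cases "n \<le> t")
    case True
    then show ?thesis using nth_ancestor_diff[OF ta nb] unfolding descendant_def by blast
  next
    case False
    then show ?thesis using nth_ancestor_diff[OF nb ta] unfolding descendant_def by auto
  qed
qed

lemma siblings_incomparable:
  assumes "rooted_tree V r p" "a \<in> children V r p z" "b \<in> children V r p z"
    and "descendant p r a b"
  shows "a = b"
proof (rule ccontr)
  assume "a \<noteq> b"
  have b: "b \<in> V" "b \<noteq> r" "p b = z" and "p a = z" using assms(2,3) unfolding children_def by auto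
  then have "descendant p r z b" using proper_descendant_parent[OF assms(4) \<open>a \<noteq> b\<close>] by simp
  moreover have "descendant p r b z" using descendant_parent[of b r p] b by simp
  moreover have "z \<in> V" using assms(1) b unfolding rooted_tree_def by blast
  ultimately have "z = b" using descendant_antisym[OF assms(1)] by blast
  then have "nth_ancestor p r 1 b b" using b by simp
  then have "(1::nat) = 0" by (rule nth_ancestor_self[OF assms(1) \<open>b \<in> V\<close>])
  then show False by simp
qed

lemma burling_tree_rooted: "burling_tree V r p l c \<Longrightarrow> rooted_tree V r p"
  unfolding burling_tree_def by blast

lemma arc_source_not_last_born:
  assumes "burling_tree V r p l c" "x \<in> V" "y \<in> c x"
  shows "x \<noteq> r" "\<not> last_born r p l x"
  using assms unfolding burling_tree_def by blast+

lemma arc_source_siblings: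
  assumes "burling_tree V r p l c" "x \<in> V" "y \<in> c x"
  shows "x \<in> children V r p (p x)" "l (p x) \<in> children V r p (p x)" "l (p x) \<noteq> x"
proof -
  note x = arc_source_not_last_born[OF assms]
  show child: "x \<in> children V r p (p x)"
    using x(1) assms(2) unfolding children_def by blast
  have "p x \<in> V"
    using burling_tree_rooted[OF assms(1)] x(1) assms(2) unfolding rooted_tree_def by blast
  moreover have "\<forall>v\<in>V. children V r p v \<noteq> {} \<longrightarrow> l v \<in> children V r p v"
    using assms(1) unfolding burling_tree_def by blast
  ultimately show "l (p x) \<in> children V r p (p x)" using child by blast
  show "l (p x) \<noteq> x"
  proof
    assume "l (p x) = x"
    with x show False unfolding last_born_def by simp
  qed
qed

lemma arc_target_on_branch:
  assumes "burling_tree V r p l c" "x \<in> V" "y \<in> c x"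
  obtains xs t where "is_branch V r p xs" "set xs = c x" "xs ! 0 = l (p x)"
    and "t < length xs" "xs ! t = y"
proof -
  note x = arc_source_not_last_born[OF assms]
  have "\<forall>v\<in>V. v \<noteq> r \<and> \<not> last_born r p l v \<longrightarrow>
      (\<exists>xs. is_branch V r p xs \<and> (xs \<noteq> [] \<longrightarrow> hd xs = l (p v)) \<and> c v = set xs)"
    using assms(1) unfolding burling_tree_def by blast
  then obtain xs where xs: "is_branch V r p xs" "xs \<noteq> [] \<longrightarrow> hd xs = l (p x)" "c x = set xs"
    using assms(2) x by blast
  obtain t where t: "t < length xs" "xs ! t = y"
    using assms(3) xs(3) by (metis in_set_conv_nth)
  have "xs ! 0 = l (p x)" using xs(2) t(1) by (cases xs) auto
  with xs t show ?thesis using that by simp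
qed

lemma arc_target_descendant:
  assumes "burling_tree V r p l c" "x \<in> V" "y \<in> c x"
  shows "descendant p r y (l (p x))"
proof -
  obtain xs t where "is_branch V r p xs" "set xs = c x" "xs ! 0 = l (p x)"
    and "t < length xs" "xs ! t = y"
    by (rule arc_target_on_branch[OF assms])
  then show ?thesis using branch_descendant[of V r p xs 0 t] by simp
qed

lemma arc_ends_incomparable:
  assumes bt: "burling_tree V r p l c" and "x \<in> V" "y \<in> c x"
  shows "\<not> descendant p r y x" "\<not> descendant p r x y"
proof -
  have rt: "rooted_tree V r p" using burling_tree_rooted[OF bt] .
  note sib = arc_source_siblings[OF assms]
  have y: "descendant p r y (l (p x))" using arc_target_descendant[OF assms] .
  show "\<not> descendant p r y x"
  proof
    assume "descendant p r y x"
    from ancestors_comparable[OF this y] have "x = l (p x)"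
      using siblings_incomparable[OF rt sib(1,2)] siblings_incomparable[OF rt sib(2,1)] by auto
    with sib(3) show False by simp
  qed
  show "\<not> descendant p r x y"
  proof
    assume "descendant p r x y"
    from descendant_trans[OF this y] have "x = l (p x)"
      by (rule siblings_incomparable[OF rt sib(1,2)])
    with sib(3) show False by simp
  qed
qed

lemma arc_from_proper_descendant:
  assumes bt: "burling_tree V r p l c" and "y \<in> V" "x \<in> c y"
    and "descendant p r y v" "y \<noteq> v"
  shows "descendant p r x v"
proof -
  have "descendant p r (l (p y)) (p y)"
    using arc_source_siblings(2)[OF bt assms(2,3)] descendant_parent[of "l (p y)" r p]
    unfolding children_def by auto
  then show ?thesis
    using arc_target_descendant[OF bt assms(2,3)] proper_descendant_parent[OF assms(4,5)]
    by (blast intro: descendant_trans)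
qed

lemma ancestor_of_arc_target:
  assumes bt: "burling_tree V r p l c" and "x \<in> V" "y \<in> c x" "descendant p r y a"
  shows "a \<in> c x \<or> descendant p r x a"
proof -
  obtain n where ya: "nth_ancestor p r n y a" using assms(4) unfolding descendant_def by blast
  obtain xs t where xs: "is_branch V r p xs" "set xs = c x" "xs ! 0 = l (p x)"
    and "t < length xs" "xs ! t = y"
    by (rule arc_target_on_branch[OF assms(1-3)])
  note sib = arc_source_siblings[OF assms(1-3)]
  show ?thesis
  proof (cases "n \<le> t")
    case True
    then have "nth_ancestor p r n y (xs ! (t - n))"
      using branch_nth_ancestor[OF xs(1), of "t - n" n] \<open>t < length xs\<close> \<open>xs ! t = y\<close>
      by (simp add: le_add_diff_inverse2)
    then have "a = xs ! (t - n)" by (rule nth_ancestor_unique[OF ya])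
    then have "a \<in> set xs" using \<open>t < length xs\<close> by simp
    with xs(2) show ?thesis by simp
  next
    case False
    have "nth_ancestor p r t y (l (p x))"
      using branch_nth_ancestor[OF xs(1), of 0 t] xs(3) \<open>t < length xs\<close> \<open>xs ! t = y\<close> by simp
    from nth_ancestor_diff[OF ya this] False
    have "nth_ancestor p r (Suc (n - t - 1)) (l (p x)) a" by (simp add: Suc_diff_Suc)
    then have "nth_ancestor p r (n - t - 1) (p x) a"
      using sib(2) unfolding children_def by simp
    then have "descendant p r (p x) a" unfolding descendant_def by blast
    moreover have "x \<noteq> r" using sib(1) unfolding children_def by simp
    ultimately show ?thesis using descendant_trans descendant_parent by fast
  qed
qed

lemma last_index_not_satisfying:
  assumes "xs \<noteq> []" "\<not> P (hd xs)" "P (last xs)"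
  obtains q where "Suc q < length xs" "\<not> P (xs ! q)" "\<forall>i. q < i \<and> i < length xs \<longrightarrow> P (xs ! i)"
proof -
  define Q where "Q = {i. i < length xs \<and> \<not> P (xs ! i)}"
  have "0 \<in> Q" using assms(1,2) unfolding Q_def by (simp add: hd_conv_nth)
  moreover have "finite Q" unfolding Q_def by simp
  ultimately have q: "Max Q \<in> Q" "\<forall>i\<in>Q. i \<le> Max Q" using Max_in by auto
  have "length xs - 1 \<notin> Q" using assms(1,3) unfolding Q_def by (simp add: last_conv_nth)
  with q(1) have "Max Q \<noteq> length xs - 1" by auto
  moreover have "Max Q < length xs" "\<not> P (xs ! Max Q)" using q(1) unfolding Q_def by auto
  ultimately have "Suc (Max Q) < length xs" "\<not> P (xs ! Max Q)" by auto
  moreover have "P (xs ! i)" if "Max Q < i" "i < length xs" for i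
  proof (rule ccontr)
    assume "\<not> P (xs ! i)"
    then have "i \<in> Q" using that(2) unfolding Q_def by simp
    with q(2) that(1) show False by auto
  qed
  ultimately show ?thesis using that by blast
qed

lemma comparable_not_adj:
  assumes "burling_tree V r p l c" "S \<subseteq> V" "x \<in> S" "y \<in> S"
    and "descendant p r x y \<or> descendant p r y x"
  shows "\<not> adj (derived_arcs S c) x y"
  using assms arc_ends_incomparable[OF assms(1)] unfolding adj_def derived_arcs_def by blast

lemma path_into_subtree_meets_in_nbrs:
  assumes bt: "burling_tree V r p l c" and SV: "S \<subseteq> V" and "v \<in> S"
    and path: "is_path S (derived_arcs S c) xs"
    and "\<not> descendant p r (hd xs) v" "descendant p r (last xs) v" "last xs \<noteq> v"
  shows "\<exists>x\<in>set xs. x \<in> in_nbrs S (derived_arcs S c) v"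
proof -
  have "xs \<noteq> []" and inS: "\<And>i. i < length xs \<Longrightarrow> xs ! i \<in> S"
    using path unfolding is_path_def by auto
  have arc: "xs ! i \<in> c (xs ! Suc i) \<or> xs ! Suc i \<in> c (xs ! i)" if "Suc i < length xs" for i
    using path that unfolding is_path_def adj_def derived_arcs_def by blast
  have in_nbr: "?thesis" if "i < length xs" "v \<in> c (xs ! i)" for i
    using that inS[OF that(1)] \<open>v \<in> S\<close> unfolding in_nbrs_def derived_arcs_def by force
  obtain q where q: "Suc q < length xs" "\<not> descendant p r (xs ! q) v"
    and below: "\<forall>i. q < i \<and> i < length xs \<longrightarrow> descendant p r (xs ! i) v"
    using last_index_not_satisfying[of xs "\<lambda>x. descendant p r x v"] assms(5-7) \<open>xs \<noteq> []\<close>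
    by blast
  have V: "xs ! i \<in> V" if "i < length xs" for i using inS[OF that] SV by blast
  show ?thesis
  proof (cases "xs ! Suc q = v")
    case False
    have below_q: "descendant p r (xs ! Suc q) v" using below q(1) by simp
    from arc[OF q(1)] show ?thesis
    proof
      assume "xs ! q \<in> c (xs ! Suc q)"
      from arc_from_proper_descendant[OF bt V[OF q(1)] this below_q False] q(2)
      show ?thesis by contradiction
    next
      assume "xs ! Suc q \<in> c (xs ! q)"
      from ancestor_of_arc_target[OF bt V this below_q] q
      have "v \<in> c (xs ! q)" by simp
      moreover have "q < length xs" using q(1) by simp
      ultimately show ?thesis using in_nbr by blast
    qed
  next
    case True
    have "Suc q \<noteq> length xs - 1"
      using True \<open>last xs \<noteq> v\<close> \<open>xs \<noteq> []\<close> by (auto simp: last_conv_nth)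
    then have next_q: "Suc (Suc q) < length xs" using q(1) by simp
    have "descendant p r (xs ! Suc (Suc q)) v" using below next_q by simp
    with arc[OF next_q] True have False
      using arc_ends_incomparable(1)[OF bt V[OF q(1)]] arc_ends_incomparable(2)[OF bt V[OF next_q]]
      by auto
    then show ?thesis ..
  qed
qed

lemma separates_if_paths_meet:
  assumes "u \<in> S - X" "w \<in> S - X" "A \<subseteq> X"
    and "\<forall>xs. is_path S E xs \<and> hd xs = u \<and> last xs = w \<longrightarrow> (\<exists>x\<in>set xs. x \<in> A)"
  shows "separates S E X u w"
  using assms unfolding separates_def connected_in_def is_path_def by blast

theorem lemma5p3:
  fixes V S :: "'a set" and r u v w :: 'a and p l :: "'a \<Rightarrow> 'a"
    and c :: "'a \<Rightarrow> 'a set" and bs :: "'a list" and i j k :: nat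
  assumes "burling_tree V r p l c"
    and "S \<subseteq> V"
    and "is_branch V r p bs"
    and "i < j" and "j < k" and "k < length bs"
    and "bs ! i = u" and "bs ! j = v" and "bs ! k = w"
    and "distinct [u, v, w]"
    and "u \<in> S" and "v \<in> S" and "w \<in> S"
  shows "(\<forall>xs. is_path S (derived_arcs S c) xs \<and> hd xs = u \<and> last xs = w \<longrightarrow>
            (\<exists>x\<in>set xs. x \<in> in_nbrs S (derived_arcs S c) v))
    \<and> full_in_star_cutset S (derived_arcs S c) (closed_in_nbhd S (derived_arcs S c) v)
    \<and> separates S (derived_arcs S c) (closed_in_nbhd S (derived_arcs S c) v) u w
    \<and> full_star_cutset S (derived_arcs S c) (closed_nbhd S (derived_arcs S c) v)
    \<and> separates S (derived_arcs S c) (closed_nbhd S (derived_arcs S c) v) u w"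
proof -
  let ?E = "derived_arcs S c"
  have vu: "descendant p r v u" and wv: "descendant p r w v"
    using branch_descendant[OF assms(3)] assms(4-9) by auto
  have uv: "\<not> descendant p r u v"
  proof
    assume "descendant p r u v"
    with vu have "u = v"
      using descendant_antisym[OF burling_tree_rooted[OF assms(1)]] assms(2,11) by blast
    with assms(10) show False by simp
  qed
  have paths: "\<forall>xs. is_path S ?E xs \<and> hd xs = u \<and> last xs = w \<longrightarrow>
      (\<exists>x\<in>set xs. x \<in> in_nbrs S ?E v)"
    using path_into_subtree_meets_in_nbrs[OF assms(1,2,12)] uv wv assms(10) by auto
  have "\<not> adj ?E u v" "\<not> adj ?E w v"
    using comparable_not_adj[OF assms(1,2)] vu wv assms(11-13) by auto
  then have "separates S ?E (closed_in_nbhd S ?E v) u w" "separates S ?E (closed_nbhd S ?E v) u w"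
    using assms(10,11,13)
    by (auto intro!: separates_if_paths_meet[OF _ _ _ paths]
        simp: closed_in_nbhd_def closed_nbhd_def in_nbrs_def adj_def)
  with paths \<open>v \<in> S\<close> show ?thesis
    unfolding full_in_star_cutset_def full_star_cutset_def disconnected_def separates_def by blast
qed

end
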